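(* Let $\Gamma$ be a complete dominance graph on vertex set $\{1,\dots,n\}$ and let $\tilde{\Gamma}$ be any finite simple weighted digraph on the same vertex set with weights $0\le\tilde{w}_{ij}\le 1$. Let $L$ and $\tilde{L}$ be the graph Laplacians of $\Gamma$ and $\tilde{\Gamma}$, respectively. Then $\mathrm{hd}(L,\tilde{L})\le n-1$.
   Context: For a weighted digraph with weights $w_{ij}\ge 0$ ($w_{ij}=0$ iff $(i,j)$ is not an edge), $d^{+}(i)=\sum_j w_{ij}$, $D=\mathrm{diag}(d^{+}(1),\dots,d^{+}(n))$, $A=[w_{ij}]$, and the graph Laplacian is $L=D-A$. A complete dominance graph is an acyclic tournament (for each pair of distinct vertices exactly one of $(i,j),(j,i)$ is an edge) in which every edge has weight $1$. For $n\times n$ complex matrices $M,\tilde{M}$ with eigenvalues $\lambda_1,\dots,\lambda_n$ and $\tilde\lambda_1,\dots,\tilde\lambda_n$, the spectral variation is $\mathrm{sv}(M,\tilde M)=\max_i\min_j|\tilde\lambda_i-\lambda_j|$ and the Hausdorff distance is $\mathrm{hd}(M,\tilde M)=\max\{\mathrm{sv}(M,\tilde M),\mathrm{sv}(\tilde M,M)\}$. *)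

theory Defs
  imports "HOL-Analysis.Analysis"
begin

text \<open>Vertices are the elements of a finite type 'n (so n = CARD('n)).
  A weighted digraph is given by its weight function w, with w i j = 0 iff (i,j) is no edge.\<close>

definition out_degree :: "('n::finite \<Rightarrow> 'n \<Rightarrow> real) \<Rightarrow> 'n \<Rightarrow> real" where
  "out_degree w i = (\<Sum>j\<in>UNIV. w i j)"

definition laplacian :: "('n::finite \<Rightarrow> 'n \<Rightarrow> real) \<Rightarrow> real^'n^'n" where
  "laplacian w = (\<chi> i j. (if i = j then out_degree w i else 0) - w i j)"

definition complete_dominance_graph :: "('n::finite \<Rightarrow> 'n \<Rightarrow> real) \<Rightarrow> bool" where
  "complete_dominance_graph w \<longleftrightarrow>
     (\<exists>E :: ('n \<times> 'n) set.
        (\<forall>i j. i \<noteq> j \<longrightarrow> ((i, j) \<in> E \<longleftrightarrow> (j, i) \<notin> E)) \<and>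
        (\<forall>i. (i, i) \<notin> E) \<and>
        acyclic E \<and>
        (\<forall>i j. w i j = (if (i, j) \<in> E then 1 else 0)))"

definition simple_unit_weighted_digraph :: "('n::finite \<Rightarrow> 'n \<Rightarrow> real) \<Rightarrow> bool" where
  "simple_unit_weighted_digraph w \<longleftrightarrow> (\<forall>i. w i i = 0) \<and> (\<forall>i j. 0 \<le> w i j \<and> w i j \<le> 1)"

definition cmat :: "real^'n^'m \<Rightarrow> complex^'n^'m" where
  "cmat M = (\<chi> i j. complex_of_real (M $ i $ j))"

definition eigenvalues :: "complex^'n^'n \<Rightarrow> complex set" where
  "eigenvalues M = {c. \<exists>v. v \<noteq> 0 \<and> M *v v = c *s v}"

definition spectral_variation :: "complex^'n^'n \<Rightarrow> complex^'n^'n \<Rightarrow> real" where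
  "spectral_variation M M' =
     Max ((\<lambda>\<mu>. Min ((\<lambda>c. cmod (\<mu> - c)) ` eigenvalues M)) ` eigenvalues M')"

definition hausdorff_distance :: "complex^'n^'n \<Rightarrow> complex^'n^'n \<Rightarrow> real" where
  "hausdorff_distance M M' = max (spectral_variation M M') (spectral_variation M' M)"

end

theory Submission
  imports Defs
begin

text \<open>The acyclic tournament has a source vertex of out-degree n - 1, whose unit vector is an
  eigenvector of L for the eigenvalue n - 1. Conversely every eigenvalue of L is an out-degree,
  hence lies in [0, n - 1]: the support of an eigenvector contains a vertex with no out-neighbour
  in the support, and the row of L at that vertex reads \<lambda> = out-degree. By Gershgorin, every
  eigenvalue of L' lies in a disc with centre and radius an out-degree d, and 0 \<le> d \<le> n - 1 puts
  these discs inside the disc of radius n - 1 about n - 1. As 0 is an eigenvalue of every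
  Laplacian, each eigenvalue of either matrix is within n - 1 of an eigenvalue of the other.\<close>

lemma eigenvectors_independent:
  fixes M :: "'a::field^'n^'n"
  assumes "finite S"
    and "\<And>c. c \<in> S \<Longrightarrow> v c \<noteq> 0 \<and> M *v v c = c *s v c"
    and "(\<Sum>c\<in>S. a c *s v c) = 0" and "c \<in> S"
  shows "a c = 0"
  using assms
proof (induction S arbitrary: a c rule: finite_induct)
  case empty
  then show ?case by simp
next
  case (insert d S)
  have eig_d: "v d \<noteq> 0" "M *v v d = d *s v d"
    using insert.prems(1) by auto
  define X where "X = (\<Sum>c\<in>S. a c *s v c)"
  have X: "X = (- a d) *s v d"
    using insert.hyps(1,2) insert.prems(2) unfolding X_def
    by (simp add: add_eq_0_iff2 add.commute vec.scale_minus_left)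
  \<comment> \<open>Applying M - d to the relation removes v d; the induction hypothesis then gives a c (c - d) = 0.\<close>
  have "M *v X = (\<Sum>c\<in>S. (a c * c) *s v c)"
    unfolding X_def vec.linear_sum[OF matrix_vector_mul_linear_gen]
      vec.linear_scale[OF matrix_vector_mul_linear_gen]
    using insert.prems(1) by (intro sum.cong) auto
  moreover have "M *v X = d *s X"
    unfolding X vec.linear_scale[OF matrix_vector_mul_linear_gen] eig_d(2)
    by (simp add: algebra_simps)
  moreover have "d *s X = (\<Sum>c\<in>S. (a c * d) *s v c)"
    unfolding X_def by (simp add: vec.scale_sum_right mult.commute)
  ultimately have "(\<Sum>c\<in>S. (a c * c) *s v c) - (\<Sum>c\<in>S. (a c * d) *s v c) = 0"
    by simp
  then have "(\<Sum>c\<in>S. (a c * (c - d)) *s v c) = 0"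
    by (simp add: sum_subtractf[symmetric] algebra_simps vec.scale_left_diff_distrib)
  then have "a c * (c - d) = 0" if "c \<in> S" for c
    using insert.IH[of "\<lambda>c. a c * (c - d)"] insert.prems(1) that by blast
  then have a_S: "a c = 0" if "c \<in> S" for c
    using insert.hyps(2) that by force
  then have "a d *s v d = 0"
    using X unfolding X_def by simp
  then have "a d = 0"
    using eig_d(1) by (simp add: vec.scale_eq_0_iff)
  then show ?case
    using a_S insert.prems(3) by auto
qed

lemma finite_eigenvalues:
  fixes M :: "complex^'n^'n"
  shows "finite (eigenvalues M)"
proof (rule ccontr)
  assume "infinite (eigenvalues M)"
  then obtain S where S: "finite S" "card S = CARD('n) + 1" "S \<subseteq> eigenvalues M"
    using infinite_arbitrarily_large by blast
  define v where "v c = (SOME v. v \<noteq> 0 \<and> M *v v = c *s v)" for c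
  have v: "v c \<noteq> 0 \<and> M *v v c = c *s v c" if "c \<in> S" for c
  proof -
    have "\<exists>v. v \<noteq> 0 \<and> M *v v = c *s v"
      using S(3) that unfolding eigenvalues_def by auto
    then show ?thesis
      unfolding v_def by (rule someI_ex)
  qed
  have inj: "inj_on v S"
  proof
    fix c d
    assume cd: "c \<in> S" "d \<in> S" "v c = v d"
    then have "c *s v c = d *s v c"
      using v by metis
    then have "(c - d) *s v c = 0"
      by (simp add: vec.scale_left_diff_distrib)
    then show "c = d"
      using v cd by (simp add: vec.scale_eq_0_iff)
  qed
  have "vec.independent (v ` S)"
  proof (rule vec.independent_if_scalars_zero)
    fix f x
    assume "(\<Sum>x\<in>v ` S. f x *s x) = 0" "x \<in> v ` S"
    then show "f x = 0"
      using eigenvectors_independent[OF S(1) v, of "f \<circ> v"] by (auto simp: sum.reindex[OF inj])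
  qed (use S in simp)
  then have "card (v ` S) \<le> vec.dim (UNIV :: (complex^'n) set)"
    by (intro vec.independent_card_le_dim) auto
  then show False
    using S(2) card_image[OF inj] by (simp add: card_cart_basis)
qed

lemma spectral_variation_le:
  assumes "eigenvalues M' \<noteq> {}"
    and "\<And>\<mu>. \<mu> \<in> eigenvalues M' \<Longrightarrow> \<exists>c\<in>eigenvalues M. cmod (\<mu> - c) \<le> r"
  shows "spectral_variation M M' \<le> r"
  unfolding spectral_variation_def
proof (subst Max_le_iff, safe)
  fix \<mu>
  assume "\<mu> \<in> eigenvalues M'"
  then obtain c where "c \<in> eigenvalues M" "cmod (\<mu> - c) \<le> r"
    using assms(2) by blast
  moreover have "Min ((\<lambda>c. cmod (\<mu> - c)) ` eigenvalues M) \<le> cmod (\<mu> - c)"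
    using finite_eigenvalues \<open>c \<in> eigenvalues M\<close> by (intro Min_le) auto
  ultimately show "Min ((\<lambda>c. cmod (\<mu> - c)) ` eigenvalues M) \<le> r"
    by linarith
qed (use assms(1) finite_eigenvalues in auto)

lemma gershgorin_disc:
  fixes M :: "complex^'n^'n"
  assumes "\<mu> \<in> eigenvalues M"
  shows "\<exists>i. cmod (\<mu> - M $ i $ i) \<le> (\<Sum>j\<in>UNIV - {i}. cmod (M $ i $ j))"
proof -
  obtain v where v: "v \<noteq> 0" "M *v v = \<mu> *s v"
    using assms unfolding eigenvalues_def by auto
  define m where "m = Max (range (\<lambda>j. cmod (v $ j)))"
  have "m \<in> range (\<lambda>j. cmod (v $ j))"
    unfolding m_def by (rule Max_in) auto
  then obtain i where "cmod (v $ i) = m"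
    by auto
  then have i: "cmod (v $ j) \<le> cmod (v $ i)" for j
    unfolding m_def by (auto intro: Max_ge)
  have "v $ i \<noteq> 0"
  proof
    assume "v $ i = 0"
    then have "v $ j = 0" for j
      using i[of j] by simp
    then show False
      using v(1) by (simp add: vec_eq_iff)
  qed
  have "\<mu> * v $ i = (\<Sum>j\<in>UNIV. M $ i $ j * v $ j)"
    using arg_cong[OF v(2), of "\<lambda>x. x $ i"] by (simp add: matrix_vector_mult_def)
  also have "\<dots> = M $ i $ i * v $ i + (\<Sum>j\<in>UNIV - {i}. M $ i $ j * v $ j)"
    by (simp add: sum.remove)
  finally have "(\<mu> - M $ i $ i) * v $ i = (\<Sum>j\<in>UNIV - {i}. M $ i $ j * v $ j)"
    by (simp add: algebra_simps)
  then have "cmod (\<mu> - M $ i $ i) * cmod (v $ i) = cmod (\<Sum>j\<in>UNIV - {i}. M $ i $ j * v $ j)"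
    by (metis norm_mult)
  also have "\<dots> \<le> (\<Sum>j\<in>UNIV - {i}. cmod (M $ i $ j) * cmod (v $ j))"
    unfolding norm_mult[symmetric] by (rule norm_sum)
  also have "\<dots> \<le> (\<Sum>j\<in>UNIV - {i}. cmod (M $ i $ j)) * cmod (v $ i)"
    unfolding sum_distrib_right using i by (intro sum_mono mult_left_mono) auto
  finally have "cmod (\<mu> - M $ i $ i) \<le> (\<Sum>j\<in>UNIV - {i}. cmod (M $ i $ j))"
    using \<open>v $ i \<noteq> 0\<close> by simp
  then show ?thesis ..
qed

lemma laplacian_mult_vec_nth:
  "(cmat (laplacian w) *v x) $ i =
     complex_of_real (out_degree w i) * x $ i - (\<Sum>j\<in>UNIV. complex_of_real (w i j) * x $ j)"
proof -
  have "(cmat (laplacian w) *v x) $ i =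
     (\<Sum>j\<in>UNIV. (if i = j then complex_of_real (out_degree w i) * x $ j else 0)
                 - complex_of_real (w i j) * x $ j)"
    unfolding matrix_vector_mult_def cmat_def laplacian_def
    by (auto intro!: sum.cong simp: algebra_simps)
  then show ?thesis
    by (simp add: sum_subtractf)
qed

lemma laplacian_eigenvalue_in_degree_disc:
  fixes w :: "'n::finite \<Rightarrow> 'n \<Rightarrow> real"
  assumes "\<And>i j. 0 \<le> w i j" and "\<mu> \<in> eigenvalues (cmat (laplacian w))"
  shows "\<exists>i. cmod (\<mu> - complex_of_real (out_degree w i - w i i)) \<le> out_degree w i - w i i"
proof -
  let ?L = "cmat (laplacian w)"
  obtain i where i: "cmod (\<mu> - ?L $ i $ i) \<le> (\<Sum>j\<in>UNIV - {i}. cmod (?L $ i $ j))"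
    using gershgorin_disc[OF assms(2)] by blast
  have "?L $ i $ i = complex_of_real (out_degree w i - w i i)"
    by (simp add: cmat_def laplacian_def)
  moreover have "(\<Sum>j\<in>UNIV - {i}. cmod (?L $ i $ j)) = (\<Sum>j\<in>UNIV - {i}. w i j)"
    using assms(1) by (intro sum.cong) (auto simp: cmat_def laplacian_def)
  moreover have "(\<Sum>j\<in>UNIV - {i}. w i j) = out_degree w i - w i i"
    unfolding out_degree_def by (simp add: sum_diff1)
  ultimately show ?thesis
    using i by metis
qed

lemma out_degree_bounds:
  fixes w :: "'n::finite \<Rightarrow> 'n \<Rightarrow> real"
  assumes "simple_unit_weighted_digraph w"
  shows "0 \<le> out_degree w i" and "out_degree w i \<le> real CARD('n) - 1"
proof -
  have w: "\<And>j. 0 \<le> w i j \<and> w i j \<le> 1" "w i i = 0"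
    using assms unfolding simple_unit_weighted_digraph_def by auto
  show "0 \<le> out_degree w i"
    unfolding out_degree_def using w by (simp add: sum_nonneg)
  have "out_degree w i = (\<Sum>j\<in>UNIV - {i}. w i j)"
    unfolding out_degree_def using w(2) by (simp add: sum_diff1)
  also have "\<dots> \<le> (\<Sum>j\<in>UNIV - {i}. 1)"
    using w(1) by (intro sum_mono) auto
  also have "\<dots> = real CARD('n) - 1"
    by (simp add: card_Diff_subset of_nat_diff)
  finally show "out_degree w i \<le> real CARD('n) - 1" .
qed

lemma laplacian_eigenvalue_near_max_degree:
  fixes w :: "'n::finite \<Rightarrow> 'n \<Rightarrow> real"
  assumes "simple_unit_weighted_digraph w" and "\<mu> \<in> eigenvalues (cmat (laplacian w))"
  shows "cmod (\<mu> - complex_of_real (real CARD('n) - 1)) \<le> real CARD('n) - 1"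
proof -
  have w: "\<And>i j. 0 \<le> w i j" "\<And>i. w i i = 0"
    using assms(1) unfolding simple_unit_weighted_digraph_def by auto
  obtain i where "cmod (\<mu> - complex_of_real (out_degree w i)) \<le> out_degree w i"
    using laplacian_eigenvalue_in_degree_disc[OF w(1) assms(2)] w(2) by auto
  moreover have "cmod (complex_of_real (out_degree w i) - complex_of_real (real CARD('n) - 1))
      \<le> real CARD('n) - 1 - out_degree w i"
    using out_degree_bounds(2)[OF assms(1), of i] by (simp flip: of_real_diff)
  ultimately have "cmod (\<mu> - complex_of_real (real CARD('n) - 1))
      \<le> out_degree w i + (real CARD('n) - 1 - out_degree w i)"
    by (rule norm_diff_triangle_le)
  then show ?thesis
    by simp
qed

lemma zero_in_eigenvalues_laplacian:
  fixes w :: "'n::finite \<Rightarrow> 'n \<Rightarrow> real"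
  shows "0 \<in> eigenvalues (cmat (laplacian w))"
proof -
  define one :: "complex^'n" where "one = (\<chi> i. 1)"
  have "one \<noteq> 0"
    unfolding one_def by (metis vec_lambda_beta zero_index zero_neq_one)
  moreover have "cmat (laplacian w) *v one = 0 *s one"
    by (simp add: vec_eq_iff laplacian_mult_vec_nth one_def out_degree_def)
  ultimately show ?thesis
    unfolding eigenvalues_def by blast
qed

lemma out_degree_of_source_in_eigenvalues_laplacian:
  fixes w :: "'n::finite \<Rightarrow> 'n \<Rightarrow> real"
  assumes "\<And>i. w i z = 0"
  shows "complex_of_real (out_degree w z) \<in> eigenvalues (cmat (laplacian w))"
proof -
  define e :: "complex^'n" where "e = axis z 1"
  have "e \<noteq> 0"
    unfolding e_def by (simp add: axis_eq_0_iff)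
  moreover have "cmat (laplacian w) *v e = complex_of_real (out_degree w z) *s e"
  proof (rule vec_eq_iff[THEN iffD2], rule allI)
    fix i
    have "(\<Sum>j\<in>UNIV. complex_of_real (w i j) * e $ j) = 0"
      using assms unfolding e_def axis_def by (simp add: if_distrib cong: if_cong)
    then show "(cmat (laplacian w) *v e) $ i = (complex_of_real (out_degree w z) *s e) $ i"
      unfolding laplacian_mult_vec_nth by (simp add: e_def axis_def)
  qed
  ultimately show ?thesis
    unfolding eigenvalues_def by blast
qed

lemma eigenvalues_laplacian_acyclic:
  fixes w :: "'n::finite \<Rightarrow> 'n \<Rightarrow> real"
  assumes "acyclic {(i, j). w i j \<noteq> 0}"
  shows "eigenvalues (cmat (laplacian w)) \<subseteq> range (\<lambda>i. complex_of_real (out_degree w i))"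
proof
  fix l
  assume "l \<in> eigenvalues (cmat (laplacian w))"
  then obtain v where v: "v \<noteq> 0" "cmat (laplacian w) *v v = l *s v"
    unfolding eigenvalues_def by auto
  obtain k where "v $ k \<noteq> 0"
    using v(1) by (metis vec_eq_iff zero_index)
  have "wf ({(i, j). w i j \<noteq> 0}\<inverse>)"
    using assms by (intro finite_acyclic_wf_converse) simp_all
  then obtain i where i: "v $ i \<noteq> 0" "\<And>j. w i j \<noteq> 0 \<Longrightarrow> v $ j = 0"
    using wf_eq_minimal[THEN iffD1, rule_format, of _ k "{j. v $ j \<noteq> 0}"] \<open>v $ k \<noteq> 0\<close>
    by blast
  have "(\<Sum>j\<in>UNIV. complex_of_real (w i j) * v $ j) = 0"
    using i(2) by (intro sum.neutral) auto
  have "l * v $ i = (cmat (laplacian w) *v v) $ i"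
    by (simp add: v(2))
  also have "\<dots> = complex_of_real (out_degree w i) * v $ i"
    unfolding laplacian_mult_vec_nth \<open>(\<Sum>j\<in>UNIV. complex_of_real (w i j) * v $ j) = 0\<close> by simp
  finally have "l * v $ i = complex_of_real (out_degree w i) * v $ i" .
  then show "l \<in> range (\<lambda>i. complex_of_real (out_degree w i))"
    using i(1) by (metis mult_cancel_right rangeI)
qed

lemma complete_dominance_graph_simple:
  "complete_dominance_graph w \<Longrightarrow> simple_unit_weighted_digraph w"
  unfolding complete_dominance_graph_def simple_unit_weighted_digraph_def by auto

lemma acyclic_complete_dominance_graph:
  assumes "complete_dominance_graph w"
  shows "acyclic {(i, j). w i j \<noteq> 0}"
proof -
  obtain E where "acyclic E" "\<forall>i j. w i j = (if (i, j) \<in> E then 1 else 0)"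
    using assms unfolding complete_dominance_graph_def by blast
  moreover from this(2) have "{(i, j). w i j \<noteq> 0} = E"
    by auto
  ultimately show ?thesis
    by simp
qed

lemma complete_dominance_graph_source:
  fixes w :: "'n::finite \<Rightarrow> 'n \<Rightarrow> real"
  assumes "complete_dominance_graph w"
  obtains z where "\<And>i. w i z = 0" and "out_degree w z = real CARD('n) - 1"
proof -
  obtain E :: "('n \<times> 'n) set" where E: "\<forall>i j. i \<noteq> j \<longrightarrow> ((i, j) \<in> E \<longleftrightarrow> (j, i) \<notin> E)"
    "acyclic E" "\<forall>i j. w i j = (if (i, j) \<in> E then 1 else 0)"
    using assms unfolding complete_dominance_graph_def by blast
  have "wf E"
    using E(2) by (intro finite_acyclic_wf) simp_all
  then obtain z where z: "\<And>i. (i, z) \<notin> E"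
    using wf_eq_minimal[THEN iffD1, rule_format, of E z UNIV] by blast
  have in_z: "w i z = 0" for i
    using z E(3) by simp
  have "out_degree w z = (\<Sum>j\<in>UNIV - {z}. w z j)"
    unfolding out_degree_def using in_z by (simp add: sum_diff1)
  also have "\<dots> = (\<Sum>j\<in>UNIV - {z}. 1)"
    using z E(1,3) by (intro sum.cong) auto
  also have "\<dots> = real CARD('n) - 1"
    by (simp add: card_Diff_subset of_nat_diff)
  finally show ?thesis
    using that in_z by blast
qed

theorem theorem3p9:
  fixes w w' :: "'n::finite \<Rightarrow> 'n \<Rightarrow> real"
  assumes "complete_dominance_graph w"
    and "simple_unit_weighted_digraph w'"
  shows "hausdorff_distance (cmat (laplacian w)) (cmat (laplacian w')) \<le> real CARD('n) - 1"
proof -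
  let ?L = "cmat (laplacian w)" and ?L' = "cmat (laplacian w')" and ?r = "real CARD('n) - 1"
  obtain z where "\<And>i. w i z = 0" "out_degree w z = ?r"
    using complete_dominance_graph_source[OF assms(1)] by blast
  then have top: "complex_of_real ?r \<in> eigenvalues ?L"
    using out_degree_of_source_in_eigenvalues_laplacian by metis
  have zero: "0 \<in> eigenvalues ?L'"
    by (rule zero_in_eigenvalues_laplacian)
  have "spectral_variation ?L ?L' \<le> ?r"
    using zero top laplacian_eigenvalue_near_max_degree[OF assms(2)]
    by (intro spectral_variation_le) blast+
  moreover have "spectral_variation ?L' ?L \<le> ?r"
  proof (rule spectral_variation_le)
    fix \<mu>
    assume "\<mu> \<in> eigenvalues ?L"
    then obtain i where "\<mu> = complex_of_real (out_degree w i)"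
      using eigenvalues_laplacian_acyclic[OF acyclic_complete_dominance_graph[OF assms(1)]] by blast
    then have "cmod (\<mu> - 0) \<le> ?r"
      using out_degree_bounds[OF complete_dominance_graph_simple[OF assms(1)], of i] by simp
    then show "\<exists>c\<in>eigenvalues ?L'. cmod (\<mu> - c) \<le> ?r"
      using zero by blast
  qed (use top in blast)
  ultimately show ?thesis
    unfolding hausdorff_distance_def by simp
qed

end
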